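(* Let $r\ge1$ and let $\mathbf{Y}^r$ be the $r$-fold Cartesian product of Young's lattice, with $p_n$ its number of rank-$n$ elements ($p_k=0$ for $k<0$, $\Delta p_n=p_n-p_{n-1}$). Then for every $n\ge1$ and $1\le j\le n$, $\Delta p_n\ge\Delta p_{n-j-\delta_{r,1}}$ (that is, $\Delta p_n\ge\Delta p_{n-j-1}$ if $r=1$ and $\Delta p_n\ge\Delta p_{n-j}$ if $r\ge2$).
   Context: Young's lattice $\mathbf{Y}$ is the set of all integer partitions ordered by inclusion of Ferrers (Young) diagrams, graded by the size of the partition; it is a $1$-differential poset. $\mathbf{Y}^r$ carries the componentwise order and the rank is the total size; it is $r$-differential. $\delta_{r,1}$ is the Kronecker delta. *)

theory Defs
  imports Main
begin

definition is_partition :: "nat list \<Rightarrow> bool" where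
  "is_partition la \<longleftrightarrow> sorted (rev la) \<and> (\<forall>x\<in>set la. 0 < x)"

definition rank_elems :: "nat \<Rightarrow> nat \<Rightarrow> nat list list set" where
  "rank_elems r n = {ps. length ps = r \<and> (\<forall>la\<in>set ps. is_partition la)
                        \<and> sum_list (map sum_list ps) = n}"

definition p :: "nat \<Rightarrow> int \<Rightarrow> int" where
  "p r k = (if k < 0 then 0 else int (card (rank_elems r (nat k))))"

definition Delta_p :: "nat \<Rightarrow> int \<Rightarrow> int" where
  "Delta_p r k = p r k - p r (k - 1)"

definition kdelta :: "nat \<Rightarrow> nat \<Rightarrow> int" where
  "kdelta a b = (if a = b then 1 else 0)"

end

theory Submission
  imports Defs
begin

text \<open>Adjoining a part 1 to the first partition of an r-tuple is a rank-raising injection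
  whose image consists of the tuples with a part 1 in the first partition. Hence
  \<open>\<Delta>p\<^sub>n\<close> counts the rank-n tuples whose first partition has no part 1, and monotonicity
  of \<open>\<Delta>p\<close> follows from further injections on these sets: for \<open>r \<ge> 2\<close> adjoin a part 1 to
  the second partition; for \<open>r = 1\<close> enlarge the largest part by 1, which needs a
  nonempty partition, i.e. rank at least 1. For \<open>r = 1\<close> the remaining values are
  \<open>\<Delta>p\<^sub>0 = 1\<close> and \<open>\<Delta>p\<^sub>n \<ge> 1\<close> for \<open>n \<ge> 2\<close>, witnessed by the partition (n).\<close>

lemma is_partition_snoc_1: "is_partition la \<Longrightarrow> is_partition (la @ [1])"
  by (auto simp: is_partition_def Suc_le_eq)

lemma is_partition_butlast_1:
  assumes "is_partition la" "1 \<in> set la"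
  shows "la = butlast la @ [1]" "is_partition (butlast la)"
proof -
  obtain ys z where la: "la = ys @ [z]"
    using assms(2) by (cases la rule: rev_exhaust) auto
  have sorted: "sorted (z # rev ys)" and pos: "\<forall>x\<in>set la. 0 < x"
    using assms(1) la by (auto simp: is_partition_def)
  have "z \<le> 1"
    using sorted assms(2) la by auto
  then have "z = 1"
    using pos la by auto
  then show "la = butlast la @ [1]" "is_partition (butlast la)"
    using la sorted pos by (auto simp: is_partition_def)
qed

lemma is_partition_Cons_Suc: "is_partition (x # xs) \<Longrightarrow> is_partition (Suc x # xs)"
  by (auto simp: is_partition_def sorted_append)

lemma length_le_sum_list: "\<forall>x\<in>set xs. 0 < (x::nat) \<Longrightarrow> length xs \<le> sum_list xs"
  by (induction xs) auto

lemma is_partition_sum_list_0: "is_partition la \<Longrightarrow> sum_list la = 0 \<Longrightarrow> la = []"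
  by (cases la) (auto simp: is_partition_def)

lemma finite_rank_elems: "finite (rank_elems r n)"
proof -
  define P where "P = {la::nat list. set la \<subseteq> {0..n} \<and> length la \<le> n}"
  have "finite P"
    unfolding P_def by (rule finite_lists_length_le) simp
  moreover have "rank_elems r n \<subseteq> {ps. set ps \<subseteq> P \<and> length ps \<le> r}"
  proof safe
    fix ps la assume ps: "ps \<in> rank_elems r n" and la: "la \<in> set ps"
    have "sum_list la \<le> n"
      using ps la member_le_sum_list[of "sum_list la" "map sum_list ps"]
      by (auto simp: rank_elems_def)
    moreover have "length la \<le> sum_list la"
      using ps la by (intro length_le_sum_list) (auto simp: rank_elems_def is_partition_def)
    ultimately show "la \<in> P"
      unfolding P_def using member_le_sum_list[of _ la] by fastforce
  qed (auto simp: rank_elems_def)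
  ultimately show ?thesis
    using finite_lists_length_le finite_subset by blast
qed

lemma rank_elems_Cons: "r \<ge> 1 \<Longrightarrow> ps \<in> rank_elems r n \<Longrightarrow> \<exists>la rest. ps = la # rest"
  by (cases ps) (auto simp: rank_elems_def)

definition rank_elems_no_1 :: "nat \<Rightarrow> nat \<Rightarrow> nat list list set" where
  "rank_elems_no_1 r n = {ps \<in> rank_elems r n. 1 \<notin> set (hd ps)}"

lemma finite_rank_elems_no_1: "finite (rank_elems_no_1 r n)"
  using finite_rank_elems[of r n] by (rule rev_finite_subset) (auto simp: rank_elems_no_1_def)

definition add_part_1 :: "nat list list \<Rightarrow> nat list list" where
  "add_part_1 ps = (hd ps @ [1]) # tl ps"

lemma rank_elems_Suc_eq:
  assumes "r \<ge> 1"
  shows "rank_elems r (Suc n) = add_part_1 ` rank_elems r n \<union> rank_elems_no_1 r (Suc n)"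
proof (intro equalityI subsetI)
  fix ps assume ps: "ps \<in> rank_elems r (Suc n)"
  show "ps \<in> add_part_1 ` rank_elems r n \<union> rank_elems_no_1 r (Suc n)"
  proof (cases "1 \<in> set (hd ps)")
    case True
    obtain la rest where ps_eq: "ps = la # rest"
      using rank_elems_Cons[OF assms ps] by blast
    have "is_partition la"
      using ps ps_eq by (auto simp: rank_elems_def)
    with True ps_eq have la: "la = butlast la @ [1]" "is_partition (butlast la)"
      using is_partition_butlast_1 by auto
    have "butlast la # rest \<in> rank_elems r n"
      using ps ps_eq la arg_cong[OF la(1), of sum_list] by (auto simp: rank_elems_def)
    moreover have "ps = add_part_1 (butlast la # rest)"
      using ps_eq la by (simp add: add_part_1_def)
    ultimately show ?thesis by blast
  qed (use ps in \<open>auto simp: rank_elems_no_1_def\<close>)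
next
  fix ps assume "ps \<in> add_part_1 ` rank_elems r n \<union> rank_elems_no_1 r (Suc n)"
  then show "ps \<in> rank_elems r (Suc n)"
  proof
    assume "ps \<in> add_part_1 ` rank_elems r n"
    then obtain qs where qs: "qs \<in> rank_elems r n" "ps = add_part_1 qs" by blast
    obtain la rest where "qs = la # rest"
      using rank_elems_Cons[OF assms qs(1)] by blast
    then show ?thesis
      using qs is_partition_snoc_1 by (auto simp: rank_elems_def add_part_1_def)
  qed (auto simp: rank_elems_no_1_def)
qed

lemma card_rank_elems_Suc:
  assumes "r \<ge> 1"
  shows "card (rank_elems r (Suc n)) = card (rank_elems r n) + card (rank_elems_no_1 r (Suc n))"
proof -
  have "inj_on add_part_1 (rank_elems r n)"
  proof (rule inj_onI)
    fix ps qs assume "ps \<in> rank_elems r n" "qs \<in> rank_elems r n" "add_part_1 ps = add_part_1 qs"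
    moreover obtain la rest mu rest' where "ps = la # rest" "qs = mu # rest'"
      using rank_elems_Cons[OF assms] calculation by meson
    ultimately show "ps = qs"
      by (simp add: add_part_1_def)
  qed
  moreover have "add_part_1 ` rank_elems r n \<inter> rank_elems_no_1 r (Suc n) = {}"
    by (auto simp: rank_elems_no_1_def add_part_1_def)
  ultimately show ?thesis
    unfolding rank_elems_Suc_eq[OF assms]
    by (simp add: card_Un_disjoint card_image finite_rank_elems finite_rank_elems_no_1)
qed

lemma rank_elems_0: "rank_elems r 0 = {replicate r []}"
proof -
  have "ps = replicate r []" if "ps \<in> rank_elems r 0" for ps
    using that is_partition_sum_list_0
    by (auto simp: rank_elems_def intro: replicate_eqI)
  then show ?thesis
    by (auto simp: rank_elems_def is_partition_def)
qed

lemma Delta_p_eq_card_rank_elems_no_1: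
  assumes "r \<ge> 1" "k \<ge> 0"
  shows "Delta_p r k = int (card (rank_elems_no_1 r (nat k)))"
proof (cases "k = 0")
  case True
  have "rank_elems_no_1 r 0 = rank_elems r 0"
    using assms(1) by (auto simp: rank_elems_no_1_def rank_elems_0)
  then show ?thesis
    using True by (simp add: Delta_p_def p_def rank_elems_0)
next
  case False
  then obtain m where m: "nat k = Suc m"
    using assms(2) not0_implies_Suc by fastforce
  then have "nat (k - 1) = m" "k > 0"
    by auto
  with m show ?thesis
    using card_rank_elems_Suc[OF assms(1), of m] by (simp add: Delta_p_def p_def)
qed

lemma Delta_p_0: "Delta_p r 0 = 1"
  by (simp add: Delta_p_def p_def rank_elems_0)

lemma Delta_p_neg: "k < 0 \<Longrightarrow> Delta_p r k = 0"
  by (simp add: Delta_p_def p_def)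

lemma card_rank_elems_no_1_Suc_mono:
  assumes "r \<ge> 2"
  shows "card (rank_elems_no_1 r n) \<le> card (rank_elems_no_1 r (Suc n))"
proof -
  define g where "g ps = hd ps # (hd (tl ps) @ [1]) # tl (tl ps)" for ps :: "nat list list"
  have shape: "\<exists>la mu rest. ps = la # mu # rest" if "ps \<in> rank_elems_no_1 r m" for ps m
    using that assms by (cases ps; cases "tl ps") (auto simp: rank_elems_no_1_def rank_elems_def)
  have "inj_on g (rank_elems_no_1 r n)"
  proof (rule inj_onI)
    fix ps qs assume "ps \<in> rank_elems_no_1 r n" "qs \<in> rank_elems_no_1 r n" "g ps = g qs"
    moreover obtain la mu rest la' mu' rest' where "ps = la # mu # rest" "qs = la' # mu' # rest'"
      using shape calculation by meson
    ultimately show "ps = qs"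
      by (simp add: g_def)
  qed
  moreover have "g ` rank_elems_no_1 r n \<subseteq> rank_elems_no_1 r (Suc n)"
    using shape is_partition_snoc_1
    by (fastforce simp: g_def rank_elems_no_1_def rank_elems_def)
  ultimately show ?thesis
    using card_inj_on_le finite_rank_elems_no_1 by blast
qed

lemma card_rank_elems_no_1_Suc_mono_r1:
  assumes "n \<ge> 1"
  shows "card (rank_elems_no_1 1 n) \<le> card (rank_elems_no_1 1 (Suc n))"
proof -
  define g where "g ps = [Suc (hd (hd ps)) # tl (hd ps)]" for ps :: "nat list list"
  have shape: "\<exists>x xs. ps = [x # xs]" if "ps \<in> rank_elems_no_1 1 n" for ps
  proof -
    have "length ps = 1"
      using that by (auto simp: rank_elems_no_1_def rank_elems_def)
    then obtain la where la: "ps = [la]"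
      by (auto simp: length_Suc_conv)
    have "la \<noteq> []"
      using that la assms by (auto simp: rank_elems_no_1_def rank_elems_def)
    then show ?thesis
      using la by (cases la) auto
  qed
  have "inj_on g (rank_elems_no_1 1 n)"
  proof (rule inj_onI)
    fix ps qs assume "ps \<in> rank_elems_no_1 1 n" "qs \<in> rank_elems_no_1 1 n" "g ps = g qs"
    moreover obtain x xs y ys where "ps = [x # xs]" "qs = [y # ys]"
      using shape calculation by meson
    ultimately show "ps = qs"
      by (simp add: g_def)
  qed
  moreover have "g ` rank_elems_no_1 1 n \<subseteq> rank_elems_no_1 1 (Suc n)"
  proof
    fix z assume "z \<in> g ` rank_elems_no_1 1 n"
    then obtain x xs where x: "z = [Suc x # xs]" "[x # xs] \<in> rank_elems_no_1 1 n"
      using shape unfolding g_def by fastforce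
    then have "is_partition (x # xs)" "x \<noteq> 1" "x \<noteq> 0"
      by (auto simp: rank_elems_no_1_def rank_elems_def is_partition_def)
    then show "z \<in> rank_elems_no_1 1 (Suc n)"
      using x is_partition_Cons_Suc by (auto simp: rank_elems_no_1_def rank_elems_def)
  qed
  ultimately show ?thesis
    using card_inj_on_le finite_rank_elems_no_1 by blast
qed

lemma Delta_p_mono:
  assumes "r \<ge> 2" "0 \<le> m" "m \<le> n"
  shows "Delta_p r m \<le> Delta_p r n"
proof -
  have "card (rank_elems_no_1 r (nat m)) \<le> card (rank_elems_no_1 r (nat n))"
    using lift_Suc_mono_le[of "\<lambda>k. card (rank_elems_no_1 r k)"]
      card_rank_elems_no_1_Suc_mono[OF assms(1)] assms by simp
  then show ?thesis
    using Delta_p_eq_card_rank_elems_no_1 assms by simp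
qed

lemma Delta_p_1_mono:
  assumes "1 \<le> m" "m \<le> n"
  shows "Delta_p 1 m \<le> Delta_p 1 n"
proof -
  have "card (rank_elems_no_1 1 (nat m)) \<le> card (rank_elems_no_1 1 (nat n))"
    using lift_Suc_mono_le_ivl[of "{1..}" "\<lambda>k. card (rank_elems_no_1 1 k)" "nat m" "nat n"]
      card_rank_elems_no_1_Suc_mono_r1 assms by force
  then show ?thesis
    using Delta_p_eq_card_rank_elems_no_1 assms by simp
qed

lemma Delta_p_1_0_le:
  assumes "n \<ge> 2"
  shows "Delta_p 1 0 \<le> Delta_p 1 n"
proof -
  have "[[nat n]] \<in> rank_elems_no_1 1 (nat n)"
    using assms by (auto simp: rank_elems_no_1_def rank_elems_def is_partition_def)
  then have "card (rank_elems_no_1 1 (nat n)) \<ge> 1"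
    using finite_rank_elems_no_1 by (metis One_nat_def Suc_leI card_gt_0_iff empty_iff)
  then show ?thesis
    using assms Delta_p_eq_card_rank_elems_no_1[of 1 n] Delta_p_0 by simp
qed

theorem proposition6p4:
  fixes r :: nat and n j :: int
  assumes "r \<ge> 1" and "n \<ge> 1" and "1 \<le> j" and "j \<le> n"
  shows "Delta_p r n \<ge> Delta_p r (n - j - kdelta r 1)"
proof (cases "r = 1")
  case True
  consider "n - j - 1 < 0" | "n - j - 1 = 0" | "n - j - 1 \<ge> 1"
    by linarith
  then have "Delta_p 1 (n - j - 1) \<le> Delta_p 1 n"
  proof cases
    case 1
    then show ?thesis
      using Delta_p_neg Delta_p_eq_card_rank_elems_no_1 assms(2) by simp
  next
    case 2
    then show ?thesis
      using Delta_p_1_0_le assms by simp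
  next
    case 3
    then show ?thesis
      using Delta_p_1_mono[of "n - j - 1" n] assms(3) by simp
  qed
  then show ?thesis
    using True by (simp add: kdelta_def)
next
  case False
  then show ?thesis
    using Delta_p_mono[of r "n - j" n] assms by (simp add: kdelta_def)
qed

end
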